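(* For all $\alpha,\beta\in[0,1]$, the star product $M_{\beta,\alpha}\ast M_{\alpha,\beta}$ of Marshall–Olkin copulas is a lower semilinear copula.
   Context: A (bivariate) copula is a distribution function on $[0,1]^2$ with uniform marginals. For $\alpha,\beta\in[0,1]$ the Marshall–Olkin copula is $M_{\alpha,\beta}(u,v)=\min\{u^{1-\alpha}v,\,uv^{1-\beta}\}$. The star product of copulas is $(A\ast B)(x,y)=\int_{[0,1]}\partial_2A(x,s)\,\partial_1B(s,y)\,ds$. A copula $C$ is lower semilinear if for every $x\in(0,1]$ the mappings $t\mapsto C(t,x)$ and $t\mapsto C(x,t)$ are linear on $[0,x]$. *)

theory Defs
  imports "HOL-Analysis.Analysis"
begin

text \<open>A bivariate copula, represented as a real function whose values on the
unit square matter: grounded, uniform margins, and 2-increasing on [0,1]^2.\<close>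
definition is_copula :: "(real \<Rightarrow> real \<Rightarrow> real) \<Rightarrow> bool" where
  "is_copula C \<longleftrightarrow>
     (\<forall>u\<in>{0..1}. C u 0 = 0 \<and> C 0 u = 0 \<and> C u 1 = u \<and> C 1 u = u) \<and>
     (\<forall>u1 u2 v1 v2. 0 \<le> u1 \<and> u1 \<le> u2 \<and> u2 \<le> 1 \<and> 0 \<le> v1 \<and> v1 \<le> v2 \<and> v2 \<le> 1 \<longrightarrow>
        C u2 v2 - C u2 v1 - C u1 v2 + C u1 v1 \<ge> 0)"

definition MO :: "real \<Rightarrow> real \<Rightarrow> real \<Rightarrow> real \<Rightarrow> real" where
  "MO \<alpha> \<beta> u v = min (u powr (1 - \<alpha>) * v) (u * v powr (1 - \<beta>))"

definition d1 :: "(real \<Rightarrow> real \<Rightarrow> real) \<Rightarrow> real \<Rightarrow> real \<Rightarrow> real" where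
  "d1 A x y = deriv (\<lambda>t. A t y) x"

definition d2 :: "(real \<Rightarrow> real \<Rightarrow> real) \<Rightarrow> real \<Rightarrow> real \<Rightarrow> real" where
  "d2 A x y = deriv (\<lambda>t. A x t) y"

definition star_prod :: "(real \<Rightarrow> real \<Rightarrow> real) \<Rightarrow> (real \<Rightarrow> real \<Rightarrow> real) \<Rightarrow> real \<Rightarrow> real \<Rightarrow> real" where
  "star_prod A B x y = (LINT s:{0..1}|lborel. d2 A x s * d1 B s y)"

definition lower_semilinear :: "(real \<Rightarrow> real \<Rightarrow> real) \<Rightarrow> bool" where
  "lower_semilinear C \<longleftrightarrow>
     (\<forall>x\<in>{0<..1}.
        (\<exists>a b. \<forall>t\<in>{0..x}. C t x = a * t + b) \<and>
        (\<exists>a b. \<forall>t\<in>{0..x}. C x t = a * t + b))"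

end

theory Submission
  imports Defs
begin

text \<open>Write A for the Marshall--Olkin copula with parameters \<alpha>, \<beta>; the theorem is the case
with the parameters exchanged. The second factor of the star product is the transpose A' of A, so
(A * A')(x, y) is the integral over s of d2 A x s * d2 A y s. Off a finite set, d2 A x s equals
x powr (1 - \<alpha>) below the kink s powr \<beta> = x powr \<alpha> and (1 - \<beta>) x s powr (- \<beta>) above it.
It lies in [0, 1], increases with x, is identically 1 for x = 1 and integrates to A(x, 1) = x;
this gives the margins, and 2-increasingness because the rectangle inequality integrates a
product of two nonnegative increments. For t \<le> x the factor d2 A x s is constant below the
kink of x, and above it d2 A t s = (t / x) d2 A x s; hence (A * A')(t, x) is linear in t, and
by symmetry so is (A * A')(x, t).\<close>

lemma min_divide_eq_divide_max:
  fixes c a b :: real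
  assumes "0 \<le> c" "0 < a" "0 < b"
  shows "min (c / a) (c / b) = c / max a b"
proof (cases "a \<le> b")
  case True
  then have "c / b \<le> c / a" using assms by (intro divide_left_mono) auto
  then show ?thesis using True by (simp add: min_absorb2 max_absorb2)
next
  case False
  then have "c / a \<le> c / b" using assms by (intro divide_left_mono) auto
  then show ?thesis using False by (simp add: min_absorb1 max_absorb1)
qed

lemma tendsto_powr_nhds: "0 < (s::real) \<Longrightarrow> ((\<lambda>t. t powr \<beta>) \<longlongrightarrow> s powr \<beta>) (nhds s)"
  by (intro tendsto_powr filterlim_ident tendsto_const) auto

lemma set_integrable_bounded:
  fixes f :: "real \<Rightarrow> real"
  assumes "f \<in> borel_measurable borel" "\<And>s. s \<in> {a..b} \<Longrightarrow> \<bar>f s\<bar> \<le> B"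
  shows "set_integrable lborel {a..b} f"
proof (rule set_integrable_bound[of lborel "{a..b}" "\<lambda>_. B"])
  show "set_integrable lborel {a..b} (\<lambda>_. B)"
    using borel_integrable_atLeastAtMost'[of a b "\<lambda>_. B"] by simp
  show "set_borel_measurable lborel {a..b} f"
    unfolding set_borel_measurable_def using assms(1) by measurable
  show "AE s in lborel. s \<in> {a..b} \<longrightarrow> norm (f s) \<le> norm B"
    using assms(2) by (intro AE_I2) force
qed

lemma set_integral_cong_finite:
  fixes f g :: "real \<Rightarrow> real"
  assumes "finite X" "\<And>s. s \<in> A \<Longrightarrow> s \<notin> X \<Longrightarrow> f s = g s"
  shows "(LINT s:A|lborel. f s) = (LINT s:A|lborel. g s)"
  unfolding set_lebesgue_integral_def
  by (rule integral_discrete_difference[of X]) (use assms in \<open>auto simp: countable_finite indicator_def\<close>)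

lemma star_prod_transpose:
  assumes "finite E" "\<And>s. s \<in> {0..1} \<Longrightarrow> s \<notin> E \<Longrightarrow> d2 A x s = g x s \<and> d2 A y s = g y s"
  shows "star_prod A (\<lambda>s y. A y s) x y = (LINT s:{0..1}|lborel. g x s * g y s)"
  unfolding star_prod_def d1_def d2_def [symmetric]
  by (rule set_integral_cong_finite[OF assms(1)]) (use assms(2) in auto)

lemma two_increasing_integral_product:
  fixes f :: "real \<Rightarrow> real \<Rightarrow> real"
  assumes meas: "\<And>x. f x \<in> borel_measurable borel"
    and bounded: "\<And>x s. x \<in> {0..1} \<Longrightarrow> s \<in> {0..1} \<Longrightarrow> \<bar>f x s\<bar> \<le> B"
    and mono: "\<And>x1 x2 s. 0 \<le> x1 \<Longrightarrow> x1 \<le> x2 \<Longrightarrow> x2 \<le> 1 \<Longrightarrow> s \<in> {0..1} \<Longrightarrow> f x1 s \<le> f x2 s"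
    and u: "0 \<le> u1" "u1 \<le> u2" "u2 \<le> 1" and v: "0 \<le> v1" "v1 \<le> v2" "v2 \<le> 1"
  defines "F \<equiv> \<lambda>x y. LINT s:{0..1}|lborel. f x s * f y s"
  shows "0 \<le> F u2 v2 - F u2 v1 - F u1 v2 + F u1 v1"
proof -
  have int: "set_integrable lborel {0..1} (\<lambda>s. f x s * f y s)" if "x \<in> {0..1}" "y \<in> {0..1}" for x y
  proof (rule set_integrable_bounded[where B = "B * B"])
    show "(\<lambda>s. f x s * f y s) \<in> borel_measurable borel" using meas by measurable
    fix s :: real assume "s \<in> {0..1}"
    then have "\<bar>f x s\<bar> \<le> B" "\<bar>f y s\<bar> \<le> B" using bounded that by auto
    then show "\<bar>f x s * f y s\<bar> \<le> B * B" by (simp add: abs_mult mult_mono')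
  qed
  have "F u2 v2 - F u2 v1 - F u1 v2 + F u1 v1 =
      (LINT s:{0..1}|lborel. f u2 s * f v2 s - f u2 s * f v1 s - (f u1 s * f v2 s - f u1 s * f v1 s))"
    using u v by (simp add: F_def int)
  also have "\<dots> = (LINT s:{0..1}|lborel. (f u2 s - f u1 s) * (f v2 s - f v1 s))"
    by (simp add: algebra_simps)
  also have "\<dots> \<ge> 0"
    unfolding set_lebesgue_integral_def
  proof (rule Bochner_Integration.integral_nonneg)
    fix s :: real
    have "s \<in> {0..1} \<Longrightarrow> 0 \<le> (f u2 s - f u1 s) * (f v2 s - f v1 s)"
      using mono[of u1 u2 s] mono[of v1 v2 s] u v by simp
    then show "0 \<le> indicator {0..1} s *\<^sub>R ((f u2 s - f u1 s) * (f v2 s - f v1 s))"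
      by (simp add: indicator_def)
  qed
  finally show ?thesis .
qed

lemma MO_zero_left [simp]: "MO \<alpha> \<beta> 0 t = 0"
  by (simp add: MO_def)

lemma MO_zero_right [simp]: "MO \<alpha> \<beta> x 0 = 0"
  by (simp add: MO_def)

lemma MO_transpose: "MO \<alpha> \<beta> x y = MO \<beta> \<alpha> y x"
  by (simp add: MO_def min.commute mult.commute)

lemma MO_eq_divide_max:
  assumes "0 < x" "0 < t"
  shows "MO \<alpha> \<beta> x t = x * t / max (x powr \<alpha>) (t powr \<beta>)"
proof -
  have "x powr (1 - \<alpha>) * t = x * t / x powr \<alpha>" "x * t powr (1 - \<beta>) = x * t / t powr \<beta>"
    using assms by (simp_all add: powr_diff)
  then show ?thesis
    using assms by (simp add: MO_def min_divide_eq_divide_max)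
qed

lemma MO_eq_linear:
  "0 < x \<Longrightarrow> 0 < t \<Longrightarrow> t powr \<beta> \<le> x powr \<alpha> \<Longrightarrow> MO \<alpha> \<beta> x t = x powr (1 - \<alpha>) * t"
  by (simp add: MO_eq_divide_max max_absorb1 powr_diff)

lemma MO_eq_power:
  "0 < x \<Longrightarrow> 0 < t \<Longrightarrow> x powr \<alpha> \<le> t powr \<beta> \<Longrightarrow> MO \<alpha> \<beta> x t = x * t powr (1 - \<beta>)"
  by (simp add: MO_eq_divide_max max_absorb2 powr_diff)

lemma MO_one_right:
  assumes "x \<in> {0..1}" "\<alpha> \<in> {0..1}"
  shows "MO \<alpha> \<beta> x 1 = x"
proof -
  have "x powr 1 \<le> x powr (1 - \<alpha>)" using assms by (intro powr_mono') auto
  then show ?thesis using assms by (simp add: MO_def)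
qed

lemma continuous_on_MO:
  assumes "0 \<le> x"
  shows "continuous_on {0..} (MO \<alpha> \<beta> x)"
proof -
  have "continuous (at t within {0..}) (MO \<alpha> \<beta> x)" if "0 \<le> t" for t
  proof (cases "t = 0")
    case False
    then have "isCont (\<lambda>t. min (x powr (1 - \<alpha>) * t) (x * t powr (1 - \<beta>))) t"
      using that by (intro continuous_intros) auto
    then show ?thesis unfolding MO_def [abs_def] by (rule continuous_at_imp_continuous_at_within)
  next
    case True
    have "\<forall>\<^sub>F t in at 0 within {0..}. 0 \<le> MO \<alpha> \<beta> x t"
      using assms by (auto simp: eventually_at_filter MO_def)
    moreover have "\<forall>\<^sub>F t in at 0 within {0..}. MO \<alpha> \<beta> x t \<le> x powr (1 - \<alpha>) * t"
      by (auto simp: eventually_at_filter MO_def)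
    moreover have "((\<lambda>t. x powr (1 - \<alpha>) * t) \<longlongrightarrow> 0) (at 0 within {0..})"
      by (auto intro!: tendsto_eq_intros)
    ultimately have "(MO \<alpha> \<beta> x \<longlongrightarrow> 0) (at 0 within {0..})"
      by (rule tendsto_sandwich[OF _ _ tendsto_const])
    then show ?thesis using True by (simp add: continuous_within)
  qed
  then show ?thesis by (simp add: continuous_on_eq_continuous_within)
qed

text \<open>For \<beta> = 0 both branches of MO \<alpha> \<beta> x are linear and there is no kink; 0 is a placeholder,
since x powr (\<alpha> / 0) would be 1.\<close>
definition MO_kink :: "real \<Rightarrow> real \<Rightarrow> real \<Rightarrow> real" where
  "MO_kink \<alpha> \<beta> x = (if \<beta> = 0 then 0 else x powr (\<alpha> / \<beta>))"

text \<open>The value at the kink is arbitrary; only integrals of MO_d2 matter.\<close>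
definition MO_d2 :: "real \<Rightarrow> real \<Rightarrow> real \<Rightarrow> real \<Rightarrow> real" where
  "MO_d2 \<alpha> \<beta> x s = (if s powr \<beta> < x powr \<alpha> then x powr (1 - \<alpha>) else (1 - \<beta>) * x * s powr (- \<beta>))"

lemma MO_d2_measurable [measurable]: "MO_d2 \<alpha> \<beta> x \<in> borel_measurable borel"
  unfolding MO_d2_def by measurable

lemma MO_d2_zero_left [simp]: "MO_d2 \<alpha> \<beta> 0 s = 0"
  by (simp add: MO_d2_def not_less)

lemma powr_eq_imp_eq_MO_kink:
  assumes "0 < x" "0 < s" "\<beta> \<noteq> 0" "s powr \<beta> = x powr \<alpha>"
  shows "s = MO_kink \<alpha> \<beta> x"
proof -
  have "s = (s powr \<beta>) powr (1 / \<beta>)" using assms(2,3) by (simp add: powr_powr)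
  also have "\<dots> = (x powr \<alpha>) powr (1 / \<beta>)" using assms by simp
  also have "\<dots> = MO_kink \<alpha> \<beta> x" using assms by (simp add: MO_kink_def powr_powr)
  finally show ?thesis .
qed

lemma MO_has_real_derivative:
  assumes "0 \<le> x" "0 < s" "s \<noteq> MO_kink \<alpha> \<beta> x"
  shows "(MO \<alpha> \<beta> x has_real_derivative MO_d2 \<alpha> \<beta> x s) (at s)"
proof (cases "x = 0")
  case True
  then have "MO \<alpha> \<beta> x = (\<lambda>_. 0)" by auto
  then show ?thesis using True by simp
next
  case False
  with assms have "0 < x" by simp
  have pos: "\<forall>\<^sub>F t in nhds s. 0 < t"
    using eventually_nhds_in_open[of "{0<..}" s] \<open>0 < s\<close> by simp
  consider "s powr \<beta> < x powr \<alpha>" | "x powr \<alpha> \<le> s powr \<beta>" "\<beta> = 0" | "x powr \<alpha> < s powr \<beta>"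
    using powr_eq_imp_eq_MO_kink[OF \<open>0 < x\<close> \<open>0 < s\<close>] assms(3) by fastforce
  then show ?thesis
  proof cases
    case 1
    have "\<forall>\<^sub>F t in nhds s. MO \<alpha> \<beta> x t = x powr (1 - \<alpha>) * t"
      using pos order_tendstoD(2)[OF tendsto_powr_nhds[OF \<open>0 < s\<close>] 1]
      by eventually_elim (use \<open>0 < x\<close> in \<open>simp add: MO_eq_linear\<close>)
    moreover have "((\<lambda>t. x powr (1 - \<alpha>) * t) has_real_derivative x powr (1 - \<alpha>)) (at s)"
      by (auto intro!: derivative_eq_intros)
    ultimately show ?thesis using 1 by (simp add: MO_d2_def DERIV_cong_ev)
  next
    case 2
    have "\<forall>\<^sub>F t in nhds s. MO \<alpha> \<beta> x t = x * t"
      using pos by eventually_elim (use \<open>0 < x\<close> \<open>0 < s\<close> 2 in \<open>simp add: MO_eq_power\<close>)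
    moreover have "((\<lambda>t. x * t) has_real_derivative x) (at s)"
      by (auto intro!: derivative_eq_intros)
    ultimately show ?thesis using 2 \<open>0 < s\<close> by (simp add: MO_d2_def DERIV_cong_ev)
  next
    case 3
    have "\<forall>\<^sub>F t in nhds s. MO \<alpha> \<beta> x t = x * t powr (1 - \<beta>)"
      using pos order_tendstoD(1)[OF tendsto_powr_nhds[OF \<open>0 < s\<close>] 3]
      by eventually_elim (use \<open>0 < x\<close> in \<open>simp add: MO_eq_power\<close>)
    moreover have "((\<lambda>t. x * t powr (1 - \<beta>)) has_real_derivative x * ((1 - \<beta>) * s powr (- \<beta>))) (at s)"
      using \<open>0 < s\<close> by (auto intro!: derivative_eq_intros)
    ultimately show ?thesis using 3 by (simp add: MO_d2_def DERIV_cong_ev mult_ac)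
  qed
qed

lemma d2_MO:
  assumes "0 \<le> x" "0 < s" "s \<noteq> MO_kink \<alpha> \<beta> x"
  shows "d2 (MO \<alpha> \<beta>) x s = MO_d2 \<alpha> \<beta> x s"
  unfolding d2_def using MO_has_real_derivative[OF assms] by (rule DERIV_imp_deriv)

lemma MO_d2_nonneg: "0 \<le> x \<Longrightarrow> \<beta> \<le> 1 \<Longrightarrow> 0 \<le> MO_d2 \<alpha> \<beta> x s"
  by (simp add: MO_d2_def)

lemma MO_d2_le_linear:
  assumes "0 \<le> x" "0 \<le> s" "\<beta> \<in> {0..1}"
  shows "MO_d2 \<alpha> \<beta> x s \<le> x powr (1 - \<alpha>)"
proof (cases "s powr \<beta> < x powr \<alpha> \<or> x = 0 \<or> s = 0")
  case True
  then show ?thesis by (auto simp: MO_d2_def)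
next
  case False
  then have "0 < x" "0 < s" "x powr \<alpha> \<le> s powr \<beta>" using assms by auto
  have "(1 - \<beta>) * x * s powr (- \<beta>) \<le> x * s powr (- \<beta>)"
    using assms by (intro mult_right_mono mult_left_le_one_le) auto
  also have "\<dots> = x / s powr \<beta>" by (simp add: powr_minus divide_inverse)
  also have "\<dots> \<le> x / x powr \<alpha>"
    using \<open>0 < x\<close> \<open>0 < s\<close> \<open>x powr \<alpha> \<le> s powr \<beta>\<close> by (intro divide_left_mono) auto
  also have "\<dots> = x powr (1 - \<alpha>)" using \<open>0 < x\<close> by (simp add: powr_diff)
  finally show ?thesis using False by (simp add: MO_d2_def)
qed

lemma abs_MO_d2_le_one:
  assumes "x \<in> {0..1}" "0 \<le> s" "\<alpha> \<in> {0..1}" "\<beta> \<in> {0..1}"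
  shows "\<bar>MO_d2 \<alpha> \<beta> x s\<bar> \<le> 1"
  using MO_d2_le_linear[of x s \<beta> \<alpha>] powr_le1[of "1 - \<alpha>" x] MO_d2_nonneg[of x \<beta> \<alpha> s] assms
  by auto

lemma MO_d2_mono:
  assumes "0 \<le> x1" "x1 \<le> x2" "0 \<le> s" "\<alpha> \<in> {0..1}" "\<beta> \<in> {0..1}"
  shows "MO_d2 \<alpha> \<beta> x1 s \<le> MO_d2 \<alpha> \<beta> x2 s"
proof (cases "s powr \<beta> < x2 powr \<alpha>")
  case True
  have "MO_d2 \<alpha> \<beta> x1 s \<le> x1 powr (1 - \<alpha>)" using assms by (intro MO_d2_le_linear) auto
  also have "\<dots> \<le> x2 powr (1 - \<alpha>)" using assms by (intro powr_mono2) auto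
  finally show ?thesis using True by (simp add: MO_d2_def)
next
  case False
  moreover have "x1 powr \<alpha> \<le> x2 powr \<alpha>" using assms by (intro powr_mono2) auto
  moreover have "(1 - \<beta>) * x1 * s powr (- \<beta>) \<le> (1 - \<beta>) * x2 * s powr (- \<beta>)"
    using assms by (intro mult_right_mono mult_left_mono) auto
  ultimately show ?thesis by (simp add: MO_d2_def)
qed

lemma MO_d2_one_left:
  assumes "s \<in> {0<..<1}" "0 \<le> \<beta>"
  shows "MO_d2 \<alpha> \<beta> 1 s = 1"
proof (cases "\<beta> = 0")
  case False
  then have "s powr \<beta> < 1 powr \<beta>" using assms by (intro powr_less_mono2) auto
  then show ?thesis by (simp add: MO_d2_def)
qed (use assms in \<open>simp add: MO_d2_def\<close>)

lemma set_integrable_MO_d2: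
  assumes "x \<in> {0..1}" "\<alpha> \<in> {0..1}" "\<beta> \<in> {0..1}"
  shows "set_integrable lborel {0..1} (MO_d2 \<alpha> \<beta> x)"
  by (rule set_integrable_bounded[where B = 1]) (use assms abs_MO_d2_le_one in auto)

lemma set_integral_MO_d2:
  assumes "x \<in> {0..1}" "c \<in> {0..1}" "\<alpha> \<in> {0..1}" "\<beta> \<in> {0..1}"
  shows "(LINT s:{0..c}|lborel. MO_d2 \<alpha> \<beta> x s) = MO \<alpha> \<beta> x c"
proof -
  have "(MO_d2 \<alpha> \<beta> x has_integral MO \<alpha> \<beta> x c - MO \<alpha> \<beta> x 0) {0..c}"
  proof (rule fundamental_theorem_of_calculus_strong[of "{0, MO_kink \<alpha> \<beta> x}"])
    show "continuous_on {0..c} (MO \<alpha> \<beta> x)"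
      by (rule continuous_on_subset[OF continuous_on_MO]) (use assms in auto)
    fix s assume "s \<in> {0..c} - {0, MO_kink \<alpha> \<beta> x}"
    then show "(MO \<alpha> \<beta> x has_vector_derivative MO_d2 \<alpha> \<beta> x s) (at s)"
      using MO_has_real_derivative[of x s \<alpha> \<beta>] assms(1)
      by (simp add: has_real_derivative_iff_has_vector_derivative)
  qed (use assms in auto)
  moreover have "set_integrable lborel {0..c} (MO_d2 \<alpha> \<beta> x)"
    using set_integrable_MO_d2[OF assms(1,3,4)] by (rule set_integrable_subset) (use assms in auto)
  ultimately show ?thesis
    by (simp add: set_borel_integral_eq_integral integral_unique)
qed

lemma MO_kink_bounds:
  assumes "x \<in> {0..1}" "0 \<le> \<alpha>" "0 \<le> \<beta>"
  shows "MO_kink \<alpha> \<beta> x \<in> {0..1}"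
  using assms by (auto simp: MO_kink_def intro!: powr_le1)

lemma MO_d2_below_kink:
  assumes "0 \<le> s" "s < MO_kink \<alpha> \<beta> x" "0 \<le> \<beta>"
  shows "MO_d2 \<alpha> \<beta> x s = x powr (1 - \<alpha>)"
proof -
  have "\<beta> \<noteq> 0" using assms by (auto simp: MO_kink_def)
  then have "s powr \<beta> < MO_kink \<alpha> \<beta> x powr \<beta>"
    using assms by (intro powr_less_mono2) auto
  also have "\<dots> = x powr \<alpha>" using \<open>\<beta> \<noteq> 0\<close> by (simp add: MO_kink_def powr_powr)
  finally show ?thesis by (simp add: MO_d2_def)
qed

lemma powr_le_MO_kink_powr:
  assumes "0 \<le> t" "t \<le> x" "0 \<le> \<alpha>" "0 < \<beta>"
  shows "t powr \<alpha> \<le> MO_kink \<alpha> \<beta> x powr \<beta>"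
proof -
  have "t powr \<alpha> \<le> x powr \<alpha>" using assms by (intro powr_mono2) auto
  then show ?thesis using assms by (simp add: MO_kink_def powr_powr)
qed

lemma MO_d2_above_kink:
  assumes "MO_kink \<alpha> \<beta> x < s" "0 \<le> t" "t \<le> x" "x \<le> 1" "0 \<le> \<alpha>" "0 \<le> \<beta>"
  shows "MO_d2 \<alpha> \<beta> t s = (1 - \<beta>) * t * s powr (- \<beta>)"
proof (cases "\<beta> = 0")
  case True
  then show ?thesis using assms powr_le1[of \<alpha> t] by (simp add: MO_d2_def MO_kink_def)
next
  case False
  have "t powr \<alpha> \<le> MO_kink \<alpha> \<beta> x powr \<beta>"
    using False assms by (intro powr_le_MO_kink_powr) auto
  also have "\<dots> \<le> s powr \<beta>"
    using assms by (intro powr_mono2) (auto simp: MO_kink_def)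
  finally show ?thesis by (simp add: MO_d2_def)
qed

lemma MO_at_kink:
  assumes "0 \<le> t" "t \<le> x" "0 \<le> \<alpha>" "0 \<le> \<beta>"
  shows "MO \<alpha> \<beta> t (MO_kink \<alpha> \<beta> x) = t * MO_kink \<alpha> \<beta> x powr (1 - \<beta>)"
proof (cases "t = 0 \<or> \<beta> = 0")
  case True
  then show ?thesis by (auto simp: MO_kink_def)
next
  case False
  then have "0 < MO_kink \<alpha> \<beta> x" using assms by (simp add: MO_kink_def)
  moreover have "t powr \<alpha> \<le> MO_kink \<alpha> \<beta> x powr \<beta>"
    using False assms by (intro powr_le_MO_kink_powr) auto
  ultimately show ?thesis using False assms by (simp add: MO_eq_power)
qed

lemma MO_d2_product_split:
  assumes "0 \<le> t" "t \<le> x" "x \<le> 1" "0 \<le> s" "s \<noteq> MO_kink \<alpha> \<beta> x" "0 \<le> \<alpha>" "0 \<le> \<beta>"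
  shows "MO_d2 \<alpha> \<beta> t s * MO_d2 \<alpha> \<beta> x s =
    x powr (1 - \<alpha>) * (indicator {..MO_kink \<alpha> \<beta> x} s * MO_d2 \<alpha> \<beta> t s)
    + t * (indicator {MO_kink \<alpha> \<beta> x<..} s * (MO_d2 \<alpha> \<beta> x s)\<^sup>2 / x)"
proof (cases "s < MO_kink \<alpha> \<beta> x")
  case True
  then show ?thesis using MO_d2_below_kink[of s \<alpha> \<beta> x] assms by simp
next
  case False
  then have "MO_kink \<alpha> \<beta> x < s" using assms by simp
  then show ?thesis
    using MO_d2_above_kink[of \<alpha> \<beta> x s t] MO_d2_above_kink[of \<alpha> \<beta> x s x] assms
    by (simp add: power2_eq_square)
qed

lemma set_integral_MO_d2_below_kink:
  assumes "0 \<le> t" "t \<le> x" "x \<le> 1" "\<alpha> \<in> {0..1}" "\<beta> \<in> {0..1}"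
  shows "(LINT s:{0..1}|lborel. indicator {..MO_kink \<alpha> \<beta> x} s * MO_d2 \<alpha> \<beta> t s)
    = t * MO_kink \<alpha> \<beta> x powr (1 - \<beta>)"
proof -
  have c: "MO_kink \<alpha> \<beta> x \<in> {0..1}" using MO_kink_bounds assms by simp
  have "(LINT s:{0..1}|lborel. indicator {..MO_kink \<alpha> \<beta> x} s * MO_d2 \<alpha> \<beta> t s)
      = (LINT s:{0..MO_kink \<alpha> \<beta> x}|lborel. MO_d2 \<alpha> \<beta> t s)"
    unfolding set_lebesgue_integral_def
    by (rule Bochner_Integration.integral_cong) (use c in \<open>auto simp: indicator_def\<close>)
  also have "\<dots> = MO \<alpha> \<beta> t (MO_kink \<alpha> \<beta> x)" using set_integral_MO_d2 c assms by auto
  also have "\<dots> = t * MO_kink \<alpha> \<beta> x powr (1 - \<beta>)" using assms by (intro MO_at_kink) auto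
  finally show ?thesis .
qed

lemma star_prod_MO_eq:
  assumes "0 \<le> x" "0 \<le> y"
  shows "star_prod (MO \<alpha> \<beta>) (MO \<beta> \<alpha>) x y = (LINT s:{0..1}|lborel. MO_d2 \<alpha> \<beta> x s * MO_d2 \<alpha> \<beta> y s)"
proof -
  have "MO \<beta> \<alpha> = (\<lambda>s y. MO \<alpha> \<beta> y s)" by (intro ext) (rule MO_transpose)
  moreover have "star_prod (MO \<alpha> \<beta>) (\<lambda>s y. MO \<alpha> \<beta> y s) x y = (LINT s:{0..1}|lborel. MO_d2 \<alpha> \<beta> x s * MO_d2 \<alpha> \<beta> y s)"
    by (rule star_prod_transpose[of "{0, MO_kink \<alpha> \<beta> x, MO_kink \<alpha> \<beta> y}"]) (use assms d2_MO in auto)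
  ultimately show ?thesis by simp
qed

lemma star_prod_MO_commute:
  "0 \<le> x \<Longrightarrow> 0 \<le> y \<Longrightarrow> star_prod (MO \<alpha> \<beta>) (MO \<beta> \<alpha>) x y = star_prod (MO \<alpha> \<beta>) (MO \<beta> \<alpha>) y x"
  by (simp add: star_prod_MO_eq mult.commute)

lemma star_prod_MO_zero_left: "0 \<le> y \<Longrightarrow> star_prod (MO \<alpha> \<beta>) (MO \<beta> \<alpha>) 0 y = 0"
  by (simp add: star_prod_MO_eq)

lemma star_prod_MO_one_right:
  assumes "x \<in> {0..1}" "\<alpha> \<in> {0..1}" "\<beta> \<in> {0..1}"
  shows "star_prod (MO \<alpha> \<beta>) (MO \<beta> \<alpha>) x 1 = x"
proof -
  have "0 \<le> x" using assms by simp
  have "star_prod (MO \<alpha> \<beta>) (MO \<beta> \<alpha>) x 1 = (LINT s:{0..1}|lborel. MO_d2 \<alpha> \<beta> x s)"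
    unfolding star_prod_MO_eq[OF \<open>0 \<le> x\<close> zero_le_one] using assms
    by (intro set_integral_cong_finite[of "{0, 1}"]) (auto simp: MO_d2_one_left)
  also have "\<dots> = MO \<alpha> \<beta> x 1" using assms by (intro set_integral_MO_d2) auto
  also have "\<dots> = x" using assms by (intro MO_one_right)
  finally show ?thesis .
qed

lemma star_prod_MO_linear_left:
  assumes x: "0 < x" "x \<le> 1" and "\<alpha> \<in> {0..1}" "\<beta> \<in> {0..1}"
  shows "\<exists>a. \<forall>t\<in>{0..x}. star_prod (MO \<alpha> \<beta>) (MO \<beta> \<alpha>) t x = a * t"
proof -
  define c where "c = MO_kink \<alpha> \<beta> x"
  let ?p = "MO_d2 \<alpha> \<beta>"
  define K where "K = (LINT s:{0..1}|lborel. indicator {c<..} s * (?p x s)\<^sup>2 / x)"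
  have bounded: "\<bar>?p y s\<bar> \<le> 1" if "y \<in> {0..1}" "s \<in> {0..1}" for y s
    using abs_MO_d2_le_one that assms by simp
  have int_K: "set_integrable lborel {0..1} (\<lambda>s. indicator {c<..} s * (?p x s)\<^sup>2 / x)"
  proof (rule set_integrable_bounded[where B = "1 / x"])
    fix s :: real assume "s \<in> {0..1}"
    then have "(?p x s)\<^sup>2 \<le> 1" using bounded x by (simp add: abs_square_le_1)
    then show "\<bar>indicator {c<..} s * (?p x s)\<^sup>2 / x\<bar> \<le> 1 / x"
      using x by (simp add: indicator_def divide_right_mono)
  qed simp
  have "star_prod (MO \<alpha> \<beta>) (MO \<beta> \<alpha>) t x = (x powr (1 - \<alpha>) * c powr (1 - \<beta>) + K) * t"
    if t: "0 \<le> t" "t \<le> x" for t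
  proof -
    have int_below: "set_integrable lborel {0..1} (\<lambda>s. indicator {..c} s * ?p t s)"
      by (rule set_integrable_bounded[where B = 1]) (use bounded t x in \<open>auto simp: indicator_def\<close>)
    have "star_prod (MO \<alpha> \<beta>) (MO \<beta> \<alpha>) t x = (LINT s:{0..1}|lborel.
        x powr (1 - \<alpha>) * (indicator {..c} s * ?p t s) + t * (indicator {c<..} s * (?p x s)\<^sup>2 / x))"
      unfolding star_prod_MO_eq[OF t(1) less_imp_le[OF x(1)]] c_def
      by (rule set_integral_cong_finite[of "{MO_kink \<alpha> \<beta> x}"])
        (use t x assms MO_d2_product_split in auto)
    also have "\<dots> = x powr (1 - \<alpha>) * (LINT s:{0..1}|lborel. indicator {..c} s * ?p t s) + t * K"
      using set_integral_add(2)[OF set_integrable_mult_right[OF int_below] set_integrable_mult_right[OF int_K]]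
      by (simp add: K_def)
    also have "(LINT s:{0..1}|lborel. indicator {..c} s * ?p t s) = t * c powr (1 - \<beta>)"
      unfolding c_def using t x assms by (intro set_integral_MO_d2_below_kink) auto
    finally show ?thesis by (simp add: algebra_simps)
  qed
  then show ?thesis by auto
qed

lemma is_copula_star_prod_MO:
  assumes "\<alpha> \<in> {0..1}" "\<beta> \<in> {0..1}"
  shows "is_copula (star_prod (MO \<alpha> \<beta>) (MO \<beta> \<alpha>))"
  unfolding is_copula_def
proof (intro conjI ballI allI impI)
  fix u :: real assume u: "u \<in> {0..1}"
  then show "star_prod (MO \<alpha> \<beta>) (MO \<beta> \<alpha>) 0 u = 0" "star_prod (MO \<alpha> \<beta>) (MO \<beta> \<alpha>) u 1 = u"
    using star_prod_MO_zero_left star_prod_MO_one_right assms by auto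
  then show "star_prod (MO \<alpha> \<beta>) (MO \<beta> \<alpha>) u 0 = 0" "star_prod (MO \<alpha> \<beta>) (MO \<beta> \<alpha>) 1 u = u"
    using star_prod_MO_commute[of u 0] star_prod_MO_commute[of u 1] u by auto
next
  fix u1 u2 v1 v2 :: real
  assume "0 \<le> u1 \<and> u1 \<le> u2 \<and> u2 \<le> 1 \<and> 0 \<le> v1 \<and> v1 \<le> v2 \<and> v2 \<le> 1"
  then show "0 \<le> star_prod (MO \<alpha> \<beta>) (MO \<beta> \<alpha>) u2 v2 - star_prod (MO \<alpha> \<beta>) (MO \<beta> \<alpha>) u2 v1
      - star_prod (MO \<alpha> \<beta>) (MO \<beta> \<alpha>) u1 v2 + star_prod (MO \<alpha> \<beta>) (MO \<beta> \<alpha>) u1 v1"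
    using two_increasing_integral_product[of "MO_d2 \<alpha> \<beta>" 1 u1 u2 v1 v2] assms
    by (simp add: star_prod_MO_eq abs_MO_d2_le_one MO_d2_mono)
qed

lemma lower_semilinear_star_prod_MO:
  assumes "\<alpha> \<in> {0..1}" "\<beta> \<in> {0..1}"
  shows "lower_semilinear (star_prod (MO \<alpha> \<beta>) (MO \<beta> \<alpha>))"
  unfolding lower_semilinear_def
proof
  fix x :: real assume "x \<in> {0<..1}"
  then obtain a where a: "\<forall>t\<in>{0..x}. star_prod (MO \<alpha> \<beta>) (MO \<beta> \<alpha>) t x = a * t"
    using star_prod_MO_linear_left assms by force
  moreover have "\<forall>t\<in>{0..x}. star_prod (MO \<alpha> \<beta>) (MO \<beta> \<alpha>) x t = a * t"
    using a star_prod_MO_commute \<open>x \<in> {0<..1}\<close> by fastforce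
  ultimately show "(\<exists>a b. \<forall>t\<in>{0..x}. star_prod (MO \<alpha> \<beta>) (MO \<beta> \<alpha>) t x = a * t + b) \<and>
      (\<exists>a b. \<forall>t\<in>{0..x}. star_prod (MO \<alpha> \<beta>) (MO \<beta> \<alpha>) x t = a * t + b)"
    by (metis add_0_right)
qed

theorem mainTheorem5:
  fixes \<alpha> \<beta> :: real
  assumes "\<alpha> \<in> {0..1}" and "\<beta> \<in> {0..1}"
  shows "is_copula (star_prod (MO \<beta> \<alpha>) (MO \<alpha> \<beta>)) \<and>
         lower_semilinear (star_prod (MO \<beta> \<alpha>) (MO \<alpha> \<beta>))"
  using is_copula_star_prod_MO lower_semilinear_star_prod_MO assms by blast

end
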